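(* Let $p \ge 2$, let $\beta_0,\beta_1,\dots,\beta_p \in \mathbb{R}$ with $\beta_j \neq 0$ for all $j\in\{1,\dots,p\}$, and consider the linear classifier $f:\mathbb{R}^p\to\{0,1\}$, $f(\boldsymbol{x}) = \mathbf{1}\big[\beta_0 + \sum_{j=1}^p \beta_j x_j > 0\big]$. Let $\tilde{\boldsymbol{x}}\in\mathbb{R}^p$ be a reference point with $f(\tilde{\boldsymbol{x}})=0$, and let $g^{\mathrm{ref}}(\boldsymbol{\beta}) = \beta_0 + \sum_{j=1}^p \beta_j \tilde{x}_j$ be the raw score at the reference. Then for every $k\in\{2,3,\dots,p\}$, the volume (Lebesgue measure) $V_k$ of the region $\{\boldsymbol{x}\in\mathbb{R}^p : f(\boldsymbol{x})=1,\ \mathrm{SEV}^+(\boldsymbol{x}) = k\}$ satisfies $$V_k = c_k \cdot \prod_{j=1}^p \left| \frac{g^{\mathrm{ref}}(\boldsymbol{\beta})}{\beta_j}\right|,$$ where $c_k$ is a finite constant that does not depend on $\beta_0,\beta_1,\dots,\beta_p$.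
   Context: For a classifier $f:\mathbb{R}^p\to\{0,1\}$, a reference $\tilde{\boldsymbol{x}}\in\mathbb{R}^p$ and a query $\boldsymbol{x}$ with $f(\boldsymbol{x})=1$, each Boolean vector $\boldsymbol{b}\in\{0,1\}^p$ determines the point $\boldsymbol{x}_{\boldsymbol{b}} := \boldsymbol{b}\odot \boldsymbol{x} + (\mathbf{1}-\boldsymbol{b})\odot\tilde{\boldsymbol{x}}$ (coordinate $j$ equals $x_j$ if $b_j=1$ and $\tilde{x}_j$ if $b_j=0$; $\odot$ is the coordinatewise product). The Sparse Explanation Value Plus of the query is $\mathrm{SEV}^+(\boldsymbol{x}) := \min\{\|\boldsymbol{b}\|_0 : \boldsymbol{b}\in\{0,1\}^p,\ f(\boldsymbol{x}_{\boldsymbol{b}})=1\}$, i.e. the minimum number of coordinates of the reference that must be replaced by the query's values to obtain a positive prediction. *)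

theory Defs
  imports "HOL-Analysis.Analysis"
begin

text \<open>Dimension p is the cardinality of the finite index type 'n; points of R^p are
  vectors of type real^'n. A Boolean vector b in {0,1}^p is a function 'n => bool
  (b j = True meaning b_j = 1); its l0-norm is the number of indices with b j.\<close>

definition mix_point :: "('n::finite \<Rightarrow> bool) \<Rightarrow> real^'n \<Rightarrow> real^'n \<Rightarrow> real^'n" where
  "mix_point b x xref = (\<chi> j. if b j then x $ j else xref $ j)"

definition l0_norm :: "('n::finite \<Rightarrow> bool) \<Rightarrow> nat" where
  "l0_norm b = card {j. b j}"

definition sev_plus :: "(real^'n::finite \<Rightarrow> nat) \<Rightarrow> real^'n \<Rightarrow> real^'n \<Rightarrow> nat" where
  "sev_plus f xref x = Min {l0_norm b | b. f (mix_point b x xref) = 1}"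

definition lin_clf :: "real \<Rightarrow> real^'n::finite \<Rightarrow> real^'n \<Rightarrow> nat" where
  "lin_clf beta0 beta x = (if beta0 + (\<Sum>j\<in>UNIV. beta $ j * x $ j) > 0 then 1 else 0)"

end

theory Submission
  imports Defs
begin

(* Write g for the score of the reference, so g <= 0. In the coordinates
   y_j = beta_j (x_j - xref_j) / (-g) the score of the hybrid point x_b is
   g (1 - sum_{j in b} y_j). Hence for g < 0 the region is the image, under a diagonal
   affine map with Jacobian prod_j |g / beta_j|, of one region T_k of y-space that does
   not depend on beta; T_k is bounded because k >= 2 forces y_j <= 1 for every single
   coordinate, and its volume is the constant c_k. For g = 0 every positive query is
   already explained by one coordinate, so the region is empty. *)

(* F b x: replacing the reference coordinates in b by those of x gives a positive prediction. *)
definition sev_level_set :: "(('n::finite \<Rightarrow> bool) \<Rightarrow> 'a \<Rightarrow> bool) \<Rightarrow> nat \<Rightarrow> 'a set" where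
  "sev_level_set F k = {x. F (\<lambda>_. True) x \<and> (\<exists>b. l0_norm b = k \<and> F b x) \<and>
     (\<forall>b. l0_norm b < k \<longrightarrow> \<not> F b x)}"

lemma finite_l0_norm_set: "finite {l0_norm b | b. P b}"
  by (rule finite_subset[of _ "range l0_norm"]) auto

lemma sev_plus_le_l0_norm:
  fixes f :: "real^'n::finite \<Rightarrow> nat"
  assumes "f (mix_point b x xref) = 1"
  shows "sev_plus f xref x \<le> l0_norm b"
  unfolding sev_plus_def using assms by (auto intro: Min_le finite_l0_norm_set)

lemma sev_plus_eq_iff:
  fixes f :: "real^'n::finite \<Rightarrow> nat"
  assumes "f x = 1"
  shows "sev_plus f xref x = k \<longleftrightarrow>
     (\<exists>b. l0_norm b = k \<and> f (mix_point b x xref) = 1) \<and>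
     (\<forall>b. l0_norm b < k \<longrightarrow> f (mix_point b x xref) \<noteq> 1)"
proof -
  let ?A = "{l0_norm b | b. f (mix_point b x xref) = 1}"
  have "mix_point (\<lambda>_. True) x xref = x"
    by (simp add: mix_point_def)
  then have "?A \<noteq> {}"
    using assms by (auto intro!: exI[of _ "\<lambda>_. True"])
  then have Min_iff: "Min ?A = k \<longleftrightarrow> k \<in> ?A \<and> (\<forall>a\<in>?A. k \<le> a)"
    by (rule Min_eq_iff[OF finite_l0_norm_set])
  have mem_iff: "k \<in> ?A \<longleftrightarrow> (\<exists>b. l0_norm b = k \<and> f (mix_point b x xref) = 1)"
    by blast
  have lower_iff: "(\<forall>a\<in>?A. k \<le> a) \<longleftrightarrow> (\<forall>b. l0_norm b < k \<longrightarrow> f (mix_point b x xref) \<noteq> 1)"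
    by (auto simp: not_less[symmetric])
  show ?thesis
    unfolding sev_plus_def by (simp only: Min_iff mem_iff lower_iff)
qed

lemma sev_plus_level_set:
  fixes f :: "real^'n::finite \<Rightarrow> nat"
  shows "{x. f x = 1 \<and> sev_plus f xref x = k} = sev_level_set (\<lambda>b x. f (mix_point b x xref) = 1) k"
proof (rule set_eqI)
  fix x
  have "mix_point (\<lambda>_. True) x xref = x"
    by (simp add: mix_point_def)
  then show "x \<in> {x. f x = 1 \<and> sev_plus f xref x = k} \<longleftrightarrow>
      x \<in> sev_level_set (\<lambda>b x. f (mix_point b x xref) = 1) k"
    using sev_plus_eq_iff[of f x xref k] unfolding sev_level_set_def by auto
qed

lemma sets_sev_level_set:
  fixes F :: "('n::finite \<Rightarrow> bool) \<Rightarrow> 'a::topological_space \<Rightarrow> bool"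
  assumes "\<And>b. {x. F b x} \<in> sets borel"
  shows "sev_level_set F k \<in> sets borel"
proof -
  have "sev_level_set F k = {x. F (\<lambda>_. True) x}
      \<inter> {x\<in>space borel. \<exists>b\<in>{b. l0_norm b = k}. F b x}
      \<inter> {x\<in>space borel. \<forall>b\<in>{b. l0_norm b < k}. \<not> F b x}"
    by (auto simp: sev_level_set_def)
  also have "\<dots> \<in> sets borel"
  proof (intro sets.Int assms)
    show "{x\<in>space borel. \<exists>b\<in>{b. l0_norm b = k}. F b x} \<in> sets borel"
      by (rule sets.sets_Collect_finite_Ex) (use assms in auto)
    have "{x\<in>space borel. \<not> F b x} = space borel - {x. F b x}" for b
      by auto
    then show "{x\<in>space borel. \<forall>b\<in>{b. l0_norm b < k}. \<not> F b x} \<in> sets borel"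
      by (intro sets.sets_Collect_finite_All) (use assms in auto)
  qed
  finally show ?thesis .
qed

lemma lin_clf_mix_point_iff:
  "lin_clf beta0 beta (mix_point b x xref) = 1 \<longleftrightarrow>
     0 < beta0 + (\<Sum>j\<in>UNIV. beta $ j * xref $ j) + (\<Sum>j | b j. beta $ j * (x $ j - xref $ j))"
proof -
  have "beta $ j * mix_point b x xref $ j =
      beta $ j * xref $ j + (if b j then beta $ j * (x $ j - xref $ j) else 0)" for j
    by (simp add: mix_point_def algebra_simps)
  then have "(\<Sum>j\<in>UNIV. beta $ j * mix_point b x xref $ j) =
      (\<Sum>j\<in>UNIV. beta $ j * xref $ j) + (\<Sum>j | b j. beta $ j * (x $ j - xref $ j))"
    using sum.inter_filter[of UNIV "\<lambda>j. beta $ j * (x $ j - xref $ j)" b]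
    by (simp add: sum.distrib)
  then show ?thesis
    by (simp add: lin_clf_def add.assoc)
qed

definition lin_sev_region :: "real \<Rightarrow> real^'n::finite \<Rightarrow> real^'n \<Rightarrow> nat \<Rightarrow> (real^'n) set" where
  "lin_sev_region beta0 beta xref k =
     {x. lin_clf beta0 beta x = 1 \<and> sev_plus (lin_clf beta0 beta) xref x = k}"

lemma sets_lin_sev_region: "lin_sev_region beta0 beta xref k \<in> sets borel"
  unfolding lin_sev_region_def sev_plus_level_set
proof (rule sets_sev_level_set)
  fix b
  have "open {x. lin_clf beta0 beta (mix_point b x xref) = 1}"
    unfolding lin_clf_mix_point_iff
    by (intro open_Collect_less continuous_intros)
  then show "{x. lin_clf beta0 beta (mix_point b x xref) = 1} \<in> sets borel"
    by simp
qed

lemma sev_plus_lin_clf_le_1: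
  assumes "beta0 + (\<Sum>j\<in>UNIV. beta $ j * xref $ j) = 0" and "lin_clf beta0 beta x = 1"
  shows "sev_plus (lin_clf beta0 beta) xref x \<le> 1"
proof -
  have "mix_point (\<lambda>_. True) x xref = x"
    by (simp add: mix_point_def)
  then have "0 < (\<Sum>j\<in>UNIV. beta $ j * (x $ j - xref $ j))"
    using assms lin_clf_mix_point_iff[of beta0 beta "\<lambda>_. True" x xref] by simp
  then obtain j where "0 < beta $ j * (x $ j - xref $ j)"
    by (meson not_le sum_nonpos)
  then have "lin_clf beta0 beta (mix_point (\<lambda>i. i = j) x xref) = 1"
    unfolding lin_clf_mix_point_iff using assms(1) by simp
  then have "sev_plus (lin_clf beta0 beta) xref x \<le> l0_norm (\<lambda>i. i = j)"
    by (rule sev_plus_le_l0_norm)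
  then show ?thesis
    by (simp add: l0_norm_def)
qed

lemma lin_sev_region_eq_empty:
  assumes "beta0 + (\<Sum>j\<in>UNIV. beta $ j * xref $ j) = 0" and "2 \<le> k"
  shows "lin_sev_region beta0 beta xref k = {}"
  using sev_plus_lin_clf_le_1[OF assms(1)] assms(2) by (fastforce simp: lin_sev_region_def)

definition unit_sev_region :: "nat \<Rightarrow> (real^'n::finite) set" where
  "unit_sev_region k = sev_level_set (\<lambda>b y. 1 < (\<Sum>j | b j. y $ j)) k"

lemma unit_sev_region_subset_cbox:
  assumes "2 \<le> k"
  shows "unit_sev_region k \<subseteq> cbox (\<chi> _. 1 - real CARD('n::finite)) (\<chi> _. 1 :: real^'n)"
proof
  fix y :: "real^'n" assume y: "y \<in> unit_sev_region k"
  have le1: "y $ j \<le> 1" for j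
  proof -
    have "l0_norm (\<lambda>i. i = j) < k"
      using assms by (simp add: l0_norm_def)
    then show ?thesis
      using y by (auto simp: unit_sev_region_def sev_level_set_def)
  qed
  have "y $ j \<ge> 1 - real CARD('n)" for j
  proof -
    have "1 < (\<Sum>i\<in>UNIV. y $ i)"
      using y by (simp add: unit_sev_region_def sev_level_set_def)
    also have "\<dots> = y $ j + (\<Sum>i\<in>UNIV - {j}. y $ i)"
      by (simp add: sum.remove)
    also have "(\<Sum>i\<in>UNIV - {j}. y $ i) \<le> real (card (UNIV - {j} :: 'n set))"
      using sum_bounded_above[of "UNIV - {j}" "\<lambda>i. y $ i" 1] le1 by simp
    also have "\<dots> \<le> real CARD('n)"
      by (simp add: card_mono)
    finally show ?thesis
      by simp
  qed
  then show "y \<in> cbox (\<chi> _. 1 - real CARD('n)) (\<chi> _. 1)"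
    using le1 by (simp add: mem_box_cart)
qed

lemma emeasure_unit_sev_region_finite:
  assumes "2 \<le> k"
  shows "emeasure lborel (unit_sev_region k :: (real^'n::finite) set) < \<infinity>"
  using unit_sev_region_subset_cbox[OF assms]
  by (intro emeasure_bounded_finite bounded_subset[OF bounded_cbox])

lemma lin_clf_mix_point_rescaled_iff:
  fixes beta0 :: real and beta xref :: "real^'n::finite"
  defines "g \<equiv> beta0 + (\<Sum>j\<in>UNIV. beta $ j * xref $ j)"
  assumes "\<forall>j. beta $ j \<noteq> 0" and "g < 0"
  shows "lin_clf beta0 beta (mix_point b (xref + (\<chi> j. - g / beta $ j) * y) xref) = 1 \<longleftrightarrow>
    1 < (\<Sum>j | b j. y $ j)"
proof -
  let ?s = "\<Sum>j | b j. y $ j"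
  have "(\<Sum>j | b j. beta $ j * ((xref + (\<chi> j. - g / beta $ j) * y) $ j - xref $ j)) = - g * ?s"
    using assms(2) by (simp add: sum_distrib_left)
  moreover have "g + - g * ?s = - g * (?s - 1)"
    by (simp add: algebra_simps)
  ultimately show ?thesis
    unfolding lin_clf_mix_point_iff g_def[symmetric] using \<open>g < 0\<close> by (simp add: mult_less_0_iff)
qed

lemma vimage_sev_level_set: "h -` sev_level_set F k = sev_level_set (\<lambda>b y. F b (h y)) k"
  by (auto simp: sev_level_set_def)

lemma vimage_lin_sev_region:
  fixes beta0 :: real and beta xref :: "real^'n::finite"
  defines "g \<equiv> beta0 + (\<Sum>j\<in>UNIV. beta $ j * xref $ j)"
  assumes "\<forall>j. beta $ j \<noteq> 0" and "g < 0"
  shows "(\<lambda>y. xref + (\<chi> j. - g / beta $ j) * y) -` lin_sev_region beta0 beta xref k = unit_sev_region k"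
  unfolding lin_sev_region_def sev_plus_level_set vimage_sev_level_set unit_sev_region_def
    lin_clf_mix_point_rescaled_iff[OF assms(2) assms(3)[unfolded g_def], folded g_def] ..

lemma emeasure_lborel_cart_affine_vimage:
  fixes a d :: "real^'n::finite"
  assumes "\<And>i. d $ i \<noteq> 0" and "A \<in> sets borel"
  shows "emeasure lborel A = ennreal (\<Prod>i\<in>UNIV. \<bar>d $ i\<bar>) * emeasure lborel ((\<lambda>y. a + d * y) -` A)"
proof -
  define T where "T y = a + (\<Sum>j\<in>Basis. ((d \<bullet> j) * (y \<bullet> j)) *\<^sub>R j)" for y :: "real^'n"
  have T_eq: "T = (\<lambda>y. a + d * y)"
    unfolding T_def by (subst vector_cart[symmetric]) (simp add: inner_axis fun_eq_iff vec_eq_iff)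
  have T_meas: "T \<in> lborel \<rightarrow>\<^sub>M borel"
    unfolding T_def by simp
  have "\<And>j. j \<in> Basis \<Longrightarrow> d \<bullet> j \<noteq> 0"
    using assms(1) by (auto simp: Basis_vec_def inner_axis)
  then have "lborel = density (distr lborel borel T) (\<lambda>_. \<Prod>j\<in>Basis. \<bar>d \<bullet> j\<bar>)"
    unfolding T_def by (rule lborel_affine_euclidean)
  then have "emeasure lborel A = emeasure (density (distr lborel borel T) (\<lambda>_. \<Prod>j\<in>Basis. \<bar>d \<bullet> j\<bar>)) A"
    by (rule arg_cong)
  also have "\<dots> = (\<Prod>j\<in>Basis. \<bar>d \<bullet> j\<bar>) * emeasure (distr lborel borel T) A"
    using assms(2) by (simp add: emeasure_density nn_integral_cmult_indicator)
  also have "\<dots> = (\<Prod>j\<in>Basis. \<bar>d \<bullet> j\<bar>) * emeasure lborel (T -` A)"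
    using assms(2) T_meas by (simp add: emeasure_distr)
  finally have "emeasure lborel A = (\<Prod>j\<in>Basis. \<bar>d \<bullet> j\<bar>) * emeasure lborel (T -` A)" .
  moreover have "(\<Prod>j\<in>Basis. \<bar>d \<bullet> j\<bar>) = (\<Prod>i\<in>UNIV. \<bar>d $ i\<bar>)"
  proof -
    have "(Basis :: (real^'n) set) = range (\<lambda>i. axis i 1)"
      by (auto simp: Basis_vec_def)
    moreover have "inj (\<lambda>i::'n. axis i (1::real))"
      by (auto simp: inj_def axis_eq_axis)
    ultimately show ?thesis
      using prod.reindex[of "\<lambda>i::'n. axis i (1::real)" UNIV "\<lambda>j. \<bar>d \<bullet> j\<bar>"] by (simp add: inner_axis)
  qed
  ultimately show ?thesis
    by (simp add: T_eq)
qed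

lemma emeasure_lin_sev_region:
  fixes beta0 :: real and beta xref :: "real^'n::finite"
  defines "g \<equiv> beta0 + (\<Sum>j\<in>UNIV. beta $ j * xref $ j)"
  assumes "\<forall>j. beta $ j \<noteq> 0" and "g < 0" and "2 \<le> k"
  shows "emeasure lborel (lin_sev_region beta0 beta xref k) =
    ennreal (measure lborel (unit_sev_region k :: (real^'n) set) * (\<Prod>j\<in>UNIV. \<bar>g / beta $ j\<bar>))"
proof -
  have scale_nz: "(\<chi> j. - g / beta $ j) $ i \<noteq> 0" for i
    using assms(2,3) by simp
  have "emeasure lborel (lin_sev_region beta0 beta xref k) =
      ennreal (\<Prod>j\<in>UNIV. \<bar>- g / beta $ j\<bar>) *
      emeasure lborel ((\<lambda>y. xref + (\<chi> j. - g / beta $ j) * y) -` lin_sev_region beta0 beta xref k)"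
    using emeasure_lborel_cart_affine_vimage[OF scale_nz sets_lin_sev_region, where a=xref] by simp
  also have "(\<lambda>y. xref + (\<chi> j. - g / beta $ j) * y) -` lin_sev_region beta0 beta xref k = unit_sev_region k"
    unfolding g_def using assms(2,3)[unfolded g_def] by (rule vimage_lin_sev_region)
  also have "emeasure lborel (unit_sev_region k :: (real^'n) set) =
      ennreal (measure lborel (unit_sev_region k :: (real^'n) set))"
    using emeasure_unit_sev_region_finite[OF assms(4)]
    by (intro emeasure_eq_ennreal_measure) (simp add: less_top)
  finally show ?thesis
    by (simp add: ennreal_mult prod_nonneg mult.commute)
qed

theorem theorem4p1:
  fixes k :: nat
  assumes "CARD('n::finite) \<ge> 2"
    and "2 \<le> k" and "k \<le> CARD('n)"
  shows "\<exists>c::real. \<forall>(beta0::real) (beta::real^'n) (xref::real^'n).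
           (\<forall>j. beta $ j \<noteq> 0) \<longrightarrow> lin_clf beta0 beta xref = 0 \<longrightarrow>
           (let S = {x. lin_clf beta0 beta x = 1 \<and> sev_plus (lin_clf beta0 beta) xref x = k};
                g = beta0 + (\<Sum>j\<in>UNIV. beta $ j * xref $ j)
            in S \<in> sets lborel \<and>
               emeasure lborel S = ennreal (c * (\<Prod>j\<in>UNIV. \<bar>g / beta $ j\<bar>)))"
proof (intro exI allI impI)
  let ?c = "measure lborel (unit_sev_region k :: (real^'n) set)"
  fix beta0 :: real and beta xref :: "real^'n"
  assume nz: "\<forall>j. beta $ j \<noteq> 0" and "lin_clf beta0 beta xref = 0"
  define g where "g = beta0 + (\<Sum>j\<in>UNIV. beta $ j * xref $ j)"
  have "g \<le> 0"
    using \<open>lin_clf beta0 beta xref = 0\<close> by (simp add: g_def lin_clf_def split: if_splits)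
  have "emeasure lborel (lin_sev_region beta0 beta xref k) = ennreal (?c * (\<Prod>j\<in>UNIV. \<bar>g / beta $ j\<bar>))"
  proof (cases "g = 0")
    case True
    then show ?thesis
      using lin_sev_region_eq_empty[OF True[unfolded g_def] assms(2)] assms(1) by simp
  next
    case False
    with \<open>g \<le> 0\<close> have "g < 0"
      by simp
    then show ?thesis
      unfolding g_def using emeasure_lin_sev_region nz assms(2) by blast
  qed
  then show "let S = {x. lin_clf beta0 beta x = 1 \<and> sev_plus (lin_clf beta0 beta) xref x = k};
                g = beta0 + (\<Sum>j\<in>UNIV. beta $ j * xref $ j)
             in S \<in> sets lborel \<and> emeasure lborel S = ennreal (?c * (\<Prod>j\<in>UNIV. \<bar>g / beta $ j\<bar>))"
    using sets_lin_sev_region by (simp add: lin_sev_region_def g_def)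
qed

end
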